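(* For every share function $\rho$, the modified $\rho$-blame $\mathbf{MB}^\rho$ is an unbiased, derivative-dependent importance value function. If moreover there is $0\le\lambda<1$ such that $\rho(k)=\lambda^k$ for all integers $k\ge1$, then $\mathbf{MB}^\rho$ is chain-rule decomposable.
   Context: $X$ is a fixed finite set of $n=|X|$ variables. An assignment over $U\subseteq X$ is a map $\mathbf u:U\to\{0,1\}$; $\mathbf u;\mathbf v$ is concatenation of assignments with disjoint domains, $\mathbf u_S$ is restriction. For $S\subseteq X$ and $\mathbf u$ over $X$, $\mathbf u^{\oplus S}$ flips the values of the variables in $S$. $\mathbb B(X)$ is the set of Boolean functions $\{0,1\}^X\to\{0,1\}$, combined pointwise by $\lor,\land$ (juxtaposition), $\oplus$, negation $\overline f$; a variable $x$ also denotes $\mathbf u\mapsto\mathbf u(x)$; $f\ge g$ is pointwise. Cofactor: $f_{\mathbf v}(\mathbf u)=f(\mathbf v;\mathbf u_{X\setminus V})$ for $\mathbf v$ over $V$; $f_{x/c}$ for $V=\{x\}$. $\mathrm{dep}(f)=\{x: f_{x/1}\ne f_{x/0}\}$; $f$ is monotone in $x$ if $f_{x/1}\ge f_{x/0}$. $f^{\oplus y}(\mathbf u)=f(\mathbf u^{\oplus\{y\}})$. For a permutation $\sigma$ of $X$: $(\sigma\mathbf u)(x)=\mathbf u(\sigma^{-1}(x))$, $(\sigma f)(\mathbf u)=f(\sigma^{-1}\mathbf u)$. $f[x/s]=s f_{x/1}\lor\overline s f_{x/0}$; $\mathrm D_xf=f_{x/1}\oplus f_{x/0}$. Modularity: $f$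 is modular in $g$ if $g$ is not constant and there are $\ell\in\mathbb B(X)$, $z\in X$ with $\mathrm{dep}(\ell)\cap\mathrm{dep}(g)=\emptyset$ and $f=\ell[z/g]$; monotonically modular if moreover $\ell$ is monotone in $z$. Then $f_{g/1}:=\ell_{z/1}$, $f_{g/0}:=\ell_{z/0}$ (well defined), and for a variable $w$, $f[g/w]:=w f_{g/1}\lor\overline w f_{g/0}$. A value function is a map $\mathfrak I:X\times\mathbb B(X)\to\mathbb R$, $(x,f)\mapsto\mathfrak I_x(f)$. It is an importance value function (IVF) if for all $x,y\in X$, permutations $\sigma$ of $X$ and $f,g,h\in\mathbb B(X)$: (Bound) $0\le\mathfrak I_x(f)\le1$; (Dum) $\mathfrak I_x(f)=0$ if $x\notin\mathrm{dep}(f)$; (Dic) $\mathfrak I_x(x)=\mathfrak I_x(\overline x)=1$; (Type) $\mathfrak I_x(f)=\mathfrak I_{\sigma(x)}(\sigma f)$ and $\mathfrak I_x(f)=\mathfrak I_x(f^{\oplus y})$; (ModEC) $\mathfrak I_x(f)\ge\mathfrak I_x(h)$ whenever $f$ and $h$ are monotonically modular in $g$, $f_{g/1}\ge h_{g/1}$, $h_{g/0}\ge f_{g/0}$, and $x\in\mathrm{dep}(g)$. $\mathfrak I$ is unbiased if $\mathfrak I_x(g)=\mathfrak I_x(\overline g)$ for all $x,g$. It is derivative dependent if $\mathrm D_xf\ge\mathrm D_xg\Rightarrow\mathfrak I_x(f)\ge\mathfrak I_x(g)$ for all $f,g,x$; chain-rule decomposable if for all $f$ modular in $g$ and $x\in\mathrm{dep}(g)$: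 $\mathfrak I_x(f)=\mathfrak I_x(g)\,\mathfrak I_g(f)$, where $\mathfrak I_g(f):=\mathfrak I_{x_g}(f[g/x_g])$ for a variable $x_g\notin\mathrm{dep}(f)$. A share function is $\rho:\mathbb N\cup\{\infty\}\to\mathbb R$, monotonically decreasing, with $\rho(\infty)=\lim_{k\to\infty}\rho(k)=0$ and $\rho(0)=1$. For $f$, $x$ and $\mathbf u$ over $X$, $\mathrm{mscs}^{\mathbf u}_x(f)$ is the minimum size of a set $S\subseteq X\setminus\{x\}$ with $f(\mathbf u^{\oplus S})\ne f(\mathbf u^{\oplus(S\cup\{x\})})$ ($\infty$ if none exists). The modified $\rho$-blame is $\mathbf{MB}^\rho_x(f)=\mathbb E_{\mathbf u\in\{0,1\}^X}[\rho(\mathrm{mscs}^{\mathbf u}_x(f))]$ under the uniform distribution. *)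

theory Defs
  imports Complex_Main "HOL-Library.Extended_Nat"
begin

text \<open>The fixed finite variable set X is the universe of a finite type 'x.
  An assignment over X is a map 'x => bool; a Boolean function is a map
  ('x => bool) => bool.\<close>

type_synonym 'x assign = "'x \<Rightarrow> bool"
type_synonym 'x bf = "'x assign \<Rightarrow> bool"

definition flip :: "'x set \<Rightarrow> 'x assign \<Rightarrow> 'x assign" where
  "flip S u = (\<lambda>y. if y \<in> S then \<not> u y else u y)"

definition var :: "'x \<Rightarrow> 'x bf" where
  "var x = (\<lambda>u. u x)"

definition neg :: "'x bf \<Rightarrow> 'x bf" where
  "neg f = (\<lambda>u. \<not> f u)"

definition is_const :: "'x bf \<Rightarrow> bool" where
  "is_const g \<longleftrightarrow> g = (\<lambda>_. True) \<or> g = (\<lambda>_. False)"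

definition cof :: "'x \<Rightarrow> bool \<Rightarrow> 'x bf \<Rightarrow> 'x bf" where
  "cof x c f = (\<lambda>u. f (u(x := c)))"

definition dep :: "'x bf \<Rightarrow> 'x set" where
  "dep f = {x. cof x True f \<noteq> cof x False f}"

definition mono_in :: "'x bf \<Rightarrow> 'x \<Rightarrow> bool" where
  "mono_in f x \<longleftrightarrow> (\<forall>u. cof x False f u \<longrightarrow> cof x True f u)"

definition flip_var :: "'x bf \<Rightarrow> 'x \<Rightarrow> 'x bf" where
  "flip_var f y = (\<lambda>u. f (flip {y} u))"

definition perm_assign :: "('x \<Rightarrow> 'x) \<Rightarrow> 'x assign \<Rightarrow> 'x assign" where
  "perm_assign \<sigma> u = (\<lambda>x. u (inv \<sigma> x))"

definition perm_bf :: "('x \<Rightarrow> 'x) \<Rightarrow> 'x bf \<Rightarrow> 'x bf" where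
  "perm_bf \<sigma> f = (\<lambda>u. f (perm_assign (inv \<sigma>) u))"

definition subst :: "'x bf \<Rightarrow> 'x \<Rightarrow> 'x bf \<Rightarrow> 'x bf" where
  "subst f x s = (\<lambda>u. (s u \<and> cof x True f u) \<or> (\<not> s u \<and> cof x False f u))"

definition bderiv :: "'x \<Rightarrow> 'x bf \<Rightarrow> 'x bf" where
  "bderiv x f = (\<lambda>u. cof x True f u \<noteq> cof x False f u)"

definition modular_wit :: "'x bf \<Rightarrow> 'x bf \<Rightarrow> 'x bf \<Rightarrow> 'x \<Rightarrow> bool" where
  "modular_wit f g l z \<longleftrightarrow> dep l \<inter> dep g = {} \<and> f = subst l z g"

definition modular :: "'x bf \<Rightarrow> 'x bf \<Rightarrow> bool" where
  "modular f g \<longleftrightarrow> \<not> is_const g \<and> (\<exists>l z. modular_wit f g l z)"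

definition mono_modular :: "'x bf \<Rightarrow> 'x bf \<Rightarrow> bool" where
  "mono_modular f g \<longleftrightarrow> \<not> is_const g \<and> (\<exists>l z. modular_wit f g l z \<and> mono_in l z)"

text \<open>f_{g/1} := l_{z/1}, f_{g/0} := l_{z/0} for some witness (l, z) of modularity
  (well defined according to the paper).\<close>
definition gcof :: "'x bf \<Rightarrow> 'x bf \<Rightarrow> bool \<Rightarrow> 'x bf" where
  "gcof f g c = (let (l, z) = (SOME (l, z). modular_wit f g l z) in cof z c l)"

definition gsubst :: "'x bf \<Rightarrow> 'x bf \<Rightarrow> 'x \<Rightarrow> 'x bf" where
  "gsubst f g w = (\<lambda>u. (u w \<and> gcof f g True u) \<or> (\<not> u w \<and> gcof f g False u))"

type_synonym 'x value_fun = "'x \<Rightarrow> 'x bf \<Rightarrow> real"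

definition IVF :: "('x::finite) value_fun \<Rightarrow> bool" where
  "IVF I \<longleftrightarrow>
     (\<forall>x f. 0 \<le> I x f \<and> I x f \<le> 1) \<and>
     (\<forall>x f. x \<notin> dep f \<longrightarrow> I x f = 0) \<and>
     (\<forall>x. I x (var x) = 1 \<and> I x (neg (var x)) = 1) \<and>
     (\<forall>x \<sigma> f. bij \<sigma> \<longrightarrow> I x f = I (\<sigma> x) (perm_bf \<sigma> f)) \<and>
     (\<forall>x y f. I x f = I x (flip_var f y)) \<and>
     (\<forall>x f g h. mono_modular f g \<and> mono_modular h g \<and>
        (\<forall>u. gcof h g True u \<longrightarrow> gcof f g True u) \<and>
        (\<forall>u. gcof f g False u \<longrightarrow> gcof h g False u) \<and>
        x \<in> dep g \<longrightarrow> I x f \<ge> I x h)"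

definition unbiased :: "'x value_fun \<Rightarrow> bool" where
  "unbiased I \<longleftrightarrow> (\<forall>x g. I x g = I x (neg g))"

definition derivative_dependent :: "'x value_fun \<Rightarrow> bool" where
  "derivative_dependent I \<longleftrightarrow>
     (\<forall>f g x. (\<forall>u. bderiv x g u \<longrightarrow> bderiv x f u) \<longrightarrow> I x f \<ge> I x g)"

text \<open>Chain rule: I_g(f) := I_{x_g}(f[g/x_g]) for a variable x_g not in dep f
  (the equation is required for every such variable).\<close>
definition chain_rule_decomposable :: "'x value_fun \<Rightarrow> bool" where
  "chain_rule_decomposable I \<longleftrightarrow>
     (\<forall>f g x xg. modular f g \<and> x \<in> dep g \<and> xg \<notin> dep f \<longrightarrow>
        I x f = I x g * I xg (gsubst f g xg))"

definition share_function :: "(enat \<Rightarrow> real) \<Rightarrow> bool" where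
  "share_function \<rho> \<longleftrightarrow>
     (\<forall>a b. a \<le> b \<longrightarrow> \<rho> b \<le> \<rho> a) \<and>
     \<rho> \<infinity> = 0 \<and> (\<lambda>k. \<rho> (enat k)) \<longlonglongrightarrow> 0 \<and> \<rho> 0 = 1"

text \<open>Minimum size of a critical set (Inf of the empty set of enat is infinity).\<close>
definition mscs :: "'x assign \<Rightarrow> 'x \<Rightarrow> 'x bf \<Rightarrow> enat" where
  "mscs u x f = Inf {enat (card S) | S. S \<subseteq> - {x} \<and> f (flip S u) \<noteq> f (flip (insert x S) u)}"

definition MB :: "(enat \<Rightarrow> real) \<Rightarrow> ('x::finite) value_fun" where
  "MB \<rho> x f = (\<Sum>u\<in>(UNIV :: 'x assign set). \<rho> (mscs u x f)) / real (card (UNIV :: 'x assign set))"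

end

theory Submission
  imports Defs
begin

text \<open>Write \<open>d\<^sub>x(f, u)\<close> for the Hamming distance from \<open>u\<close> to the nearest assignment,
  reached by flipping variables other than \<open>x\<close>, at which \<open>x\<close> is pivotal for \<open>f\<close>; then
  \<open>\<^bold>M\<^bold>B\<^sup>\<rho>\<^sub>x(f)\<close> is the uniform average of \<open>\<rho>(d\<^sub>x(f, u))\<close>. Renaming and negating variables
  permute the assignments and so leave the average unchanged. Enlarging the set of
  assignments at which \<open>x\<close> is pivotal can only decrease the distance, which gives
  derivative dependence and, together with the identity
  \<open>piv\<^sub>x(\<ell>[z/g]) = piv\<^sub>x(g) \<and> D\<^sub>z\<ell>\<close> for \<open>x \<in> dep g\<close>, also ModEC.
  For the chain rule, the two conjuncts of this identity depend on disjoint sets of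
  variables, so the distance to their conjunction is the sum of the two distances;
  \<open>\<rho>(k) = \<lambda>\<^sup>k\<close> turns this sum into a product, and the average of a product of functions of
  disjoint blocks of variables is the product of the averages.\<close>

lemma flip_flip [simp]: "flip A (flip A u) = u"
  by (auto simp: flip_def fun_eq_iff)

lemma flip_empty [simp]: "flip {} u = u"
  by (simp add: flip_def)

lemma flip_comm: "flip A (flip B u) = flip B (flip A u)"
  by (auto simp: flip_def fun_eq_iff)

lemma flip_insert: "x \<notin> S \<Longrightarrow> flip (insert x S) u = flip {x} (flip S u)"
  by (auto simp: flip_def fun_eq_iff)

lemma mem_dep_iff: "y \<in> dep h \<longleftrightarrow> (\<exists>u. h (u(y := True)) \<noteq> h (u(y := False)))"
  by (auto simp: dep_def cof_def fun_eq_iff)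

lemma fun_upd_nondep: "y \<notin> dep h \<Longrightarrow> h (u(y := a)) = h (u(y := b))"
  using mem_dep_iff[of y h] by (cases a; cases b) auto

lemma bf_eq_if_agree_on_dep:
  fixes g :: "('x::finite) bf"
  assumes "\<forall>y\<in>dep g. u y = v y"
  shows "g u = g v"
proof -
  have agree_off: "g u = g v" if "finite D" "\<forall>y. y \<notin> D \<longrightarrow> u y = v y" "D \<inter> dep g = {}" for D u
    using that
  proof (induction D arbitrary: u rule: finite_induct)
    case empty
    then have "u = v" by auto
    then show ?case by simp
  next
    case (insert y D)
    have "g u = g (u(y := u y))" by simp
    also have "\<dots> = g (u(y := v y))"
      using insert.prems(2) fun_upd_nondep[of y g u "u y" "v y"] by blast
    also have "\<dots> = g v"
    proof (rule insert.IH)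
      show "\<forall>z. z \<notin> D \<longrightarrow> (u(y := v y)) z = v z" using insert.prems(1) by simp
      show "D \<inter> dep g = {}" using insert.prems(2) by blast
    qed
    finally show ?case .
  qed
  show ?thesis by (rule agree_off[of "{y. u y \<noteq> v y}"]) (use assms in auto)
qed

lemma dep_subsetI:
  assumes "\<And>u v. \<forall>y\<in>A. u y = v y \<Longrightarrow> h u = h v"
  shows "dep h \<subseteq> A"
proof
  fix y assume "y \<in> dep h"
  then obtain u where u: "h (u(y := True)) \<noteq> h (u(y := False))"
    using mem_dep_iff by metis
  show "y \<in> A"
  proof (rule ccontr)
    assume "y \<notin> A"
    then have "\<forall>z\<in>A. (u(y := True)) z = (u(y := False)) z" by auto
    then show False using assms u by blast
  qed
qed

lemma dep_cof_subset:
  fixes l :: "('x::finite) bf"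
  shows "dep (cof z c l) \<subseteq> dep l - {z}"
proof (rule dep_subsetI)
  fix u v :: "'x assign"
  assume "\<forall>y\<in>dep l - {z}. u y = v y"
  then have "l (u(z := c)) = l (v(z := c))" by (intro bf_eq_if_agree_on_dep[of l]) auto
  then show "cof z c l u = cof z c l v" by (simp add: cof_def)
qed

lemma dep_bderiv_subset:
  fixes l :: "('x::finite) bf"
  shows "dep (bderiv z l) \<subseteq> dep (cof z True l) \<union> dep (cof z False l)"
proof (rule dep_subsetI)
  fix u v :: "'x assign"
  assume agree: "\<forall>y\<in>dep (cof z True l) \<union> dep (cof z False l). u y = v y"
  have "cof z c l u = cof z c l v" for c
    by (rule bf_eq_if_agree_on_dep[of "cof z c l"]) (cases c; use agree in auto)
  then show "bderiv z l u = bderiv z l v" by (simp add: bderiv_def)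
qed

section \<open>Distance to a predicate by flipping variables\<close>

definition flip_dist :: "'x bf \<Rightarrow> 'x set \<Rightarrow> 'x assign \<Rightarrow> enat" where
  "flip_dist P C u = Inf {enat (card S) | S. S \<subseteq> C \<and> P (flip S u)}"

lemma flip_dist_le: "S \<subseteq> C \<Longrightarrow> P (flip S u) \<Longrightarrow> flip_dist P C u \<le> enat (card S)"
  unfolding flip_dist_def by (rule Inf_lower) blast

lemma flip_dist_geI:
  "(\<And>S. S \<subseteq> C \<Longrightarrow> P (flip S u) \<Longrightarrow> e \<le> enat (card S)) \<Longrightarrow> e \<le> flip_dist P C u"
  unfolding flip_dist_def by (rule Inf_greatest) blast

lemma flip_dist_eq_0: "P u \<Longrightarrow> flip_dist P C u = 0"
  using flip_dist_le[of "{}" C P u] by (simp add: zero_enat_def[symmetric])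

lemma flip_dist_eq_infinity: "(\<And>v. \<not> P v) \<Longrightarrow> flip_dist P C u = \<infinity>"
  unfolding flip_dist_def by (simp add: Inf_enat_def)

lemma flip_dist_attained:
  assumes "flip_dist P C u \<noteq> \<infinity>"
  obtains S where "S \<subseteq> C" "P (flip S u)" "flip_dist P C u = enat (card S)"
proof -
  let ?A = "{enat (card S) | S. S \<subseteq> C \<and> P (flip S u)}"
  have ne: "?A \<noteq> {}"
    using assms unfolding flip_dist_def by (metis Inf_empty top_enat_def)
  then obtain e where "e \<in> ?A" by blast
  then have "(LEAST e. e \<in> ?A) \<in> ?A" by (rule LeastI)
  then have "Inf ?A \<in> ?A" using ne by (simp add: Inf_enat_def)
  then show ?thesis using that unfolding flip_dist_def by blast
qed

lemma flip_dist_antimono: "(\<And>v. Q v \<Longrightarrow> P v) \<Longrightarrow> flip_dist P C u \<le> flip_dist Q C u"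
  unfolding flip_dist_def by (rule Inf_superset_mono) blast

lemma flip_inter_dep:
  fixes P :: "('x::finite) bf"
  shows "P (flip (S \<inter> dep P) u) = P (flip S u)"
  by (rule bf_eq_if_agree_on_dep[of P]) (auto simp: flip_def)

lemma flip_dist_inter_dep:
  fixes P :: "('x::finite) bf"
  shows "flip_dist P (C \<inter> dep P) u = flip_dist P C u"
proof (rule antisym)
  show "flip_dist P (C \<inter> dep P) u \<le> flip_dist P C u"
  proof (rule flip_dist_geI)
    fix S assume "S \<subseteq> C" "P (flip S u)"
    then have "flip_dist P (C \<inter> dep P) u \<le> enat (card (S \<inter> dep P))"
      by (intro flip_dist_le) (auto simp: flip_inter_dep)
    also have "\<dots> \<le> enat (card S)" by (simp add: card_mono)
    finally show "flip_dist P (C \<inter> dep P) u \<le> enat (card S)" .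
  qed
  show "flip_dist P C u \<le> flip_dist P (C \<inter> dep P) u"
    unfolding flip_dist_def by (rule Inf_superset_mono) blast
qed

lemma flip_dist_cong:
  fixes P :: "('x::finite) bf"
  assumes "\<forall>y\<in>dep P. u y = v y"
  shows "flip_dist P C u = flip_dist P C v"
proof -
  have "P (flip S u) = P (flip S v)" for S
    by (rule bf_eq_if_agree_on_dep[of P]) (use assms in \<open>auto simp: flip_def\<close>)
  then show ?thesis unfolding flip_dist_def by simp
qed

lemma flip_dist_flip: "flip_dist (\<lambda>v. P (flip A v)) C u = flip_dist P C (flip A u)"
  by (simp add: flip_dist_def flip_comm)

lemma flip_dist_comp_bij:
  assumes "bij \<sigma>"
  shows "flip_dist (\<lambda>v. P (v \<circ> \<sigma>)) C u = flip_dist P (\<sigma> -` C) (u \<circ> \<sigma>)"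
proof -
  have inj: "inj \<sigma>" and surj: "surj \<sigma>" using assms bij_is_inj bij_is_surj by auto
  have comp_flip: "flip S u \<circ> \<sigma> = flip (\<sigma> -` S) (u \<circ> \<sigma>)" for S
    by (auto simp: flip_def fun_eq_iff)
  show ?thesis
  proof (rule antisym)
    show "flip_dist (\<lambda>v. P (v \<circ> \<sigma>)) C u \<le> flip_dist P (\<sigma> -` C) (u \<circ> \<sigma>)"
    proof (rule flip_dist_geI)
      fix T assume "T \<subseteq> \<sigma> -` C" "P (flip T (u \<circ> \<sigma>))"
      moreover have "\<sigma> -` (\<sigma> ` T) = T" using inj by (simp add: inj_vimage_image_eq)
      ultimately have "flip_dist (\<lambda>v. P (v \<circ> \<sigma>)) C u \<le> enat (card (\<sigma> ` T))"
        by (intro flip_dist_le) (auto simp: comp_flip)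
      then show "flip_dist (\<lambda>v. P (v \<circ> \<sigma>)) C u \<le> enat (card T)"
        using inj by (simp add: card_image inj_on_subset)
    qed
    show "flip_dist P (\<sigma> -` C) (u \<circ> \<sigma>) \<le> flip_dist (\<lambda>v. P (v \<circ> \<sigma>)) C u"
    proof (rule flip_dist_geI)
      fix S assume "S \<subseteq> C" "P (flip S u \<circ> \<sigma>)"
      then have "flip_dist P (\<sigma> -` C) (u \<circ> \<sigma>) \<le> enat (card (\<sigma> -` S))"
        by (intro flip_dist_le) (auto simp: comp_flip)
      then show "flip_dist P (\<sigma> -` C) (u \<circ> \<sigma>) \<le> enat (card S)"
        using inj surj by (simp add: card_vimage_inj)
    qed
  qed
qed

lemma flip_dist_conj:
  fixes P Q :: "('x::finite) bf"
  assumes disj: "dep P \<inter> dep Q = {}"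
  shows "flip_dist (\<lambda>v. P v \<and> Q v) C u = flip_dist P C u + flip_dist Q C u"
proof (rule antisym)
  show "flip_dist (\<lambda>v. P v \<and> Q v) C u \<le> flip_dist P C u + flip_dist Q C u"
  proof (cases "flip_dist P C u = \<infinity> \<or> flip_dist Q C u = \<infinity>")
    case False
    then obtain S1 where
      S1: "S1 \<subseteq> C \<inter> dep P" "P (flip S1 u)" "flip_dist P C u = enat (card S1)"
      using flip_dist_attained[of P "C \<inter> dep P" u] by (auto simp: flip_dist_inter_dep)
    from False obtain S2 where
      S2: "S2 \<subseteq> C \<inter> dep Q" "Q (flip S2 u)" "flip_dist Q C u = enat (card S2)"
      using flip_dist_attained[of Q "C \<inter> dep Q" u] by (auto simp: flip_dist_inter_dep)
    have "P (flip (S1 \<union> S2) u) = P (flip S1 u)"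
      by (rule bf_eq_if_agree_on_dep[of P]) (use S1 S2 disj in \<open>auto simp: flip_def\<close>)
    moreover have "Q (flip (S1 \<union> S2) u) = Q (flip S2 u)"
      by (rule bf_eq_if_agree_on_dep[of Q]) (use S1 S2 disj in \<open>auto simp: flip_def\<close>)
    ultimately have "flip_dist (\<lambda>v. P v \<and> Q v) C u \<le> enat (card (S1 \<union> S2))"
      using S1 S2 by (intro flip_dist_le) auto
    also have "card (S1 \<union> S2) = card S1 + card S2"
      using S1 S2 disj by (intro card_Un_disjoint) auto
    finally show ?thesis using S1 S2 by simp
  qed auto
  show "flip_dist P C u + flip_dist Q C u \<le> flip_dist (\<lambda>v. P v \<and> Q v) C u"
  proof (rule flip_dist_geI)
    fix S assume S: "S \<subseteq> C" "P (flip S u) \<and> Q (flip S u)"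
    have "card (S \<inter> dep P) + card (S \<inter> dep Q) = card (S \<inter> dep P \<union> S \<inter> dep Q)"
      using disj by (intro card_Un_disjoint[symmetric]) auto
    also have "\<dots> \<le> card S" by (rule card_mono) auto
    finally have card_le: "card (S \<inter> dep P) + card (S \<inter> dep Q) \<le> card S" .
    have "flip_dist P C u \<le> enat (card (S \<inter> dep P))" "flip_dist Q C u \<le> enat (card (S \<inter> dep Q))"
      using S by (auto intro!: flip_dist_le simp: flip_inter_dep)
    then have "flip_dist P C u + flip_dist Q C u
        \<le> enat (card (S \<inter> dep P)) + enat (card (S \<inter> dep Q))"
      by (rule add_mono)
    also have "\<dots> \<le> enat (card S)" using card_le by simp
    finally show "flip_dist P C u + flip_dist Q C u \<le> enat (card S)" .
  qed
qed

section \<open>Expected shares\<close>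

definition expected_share :: "(enat \<Rightarrow> real) \<Rightarrow> ('x::finite) bf \<Rightarrow> 'x set \<Rightarrow> real" where
  "expected_share \<rho> P C =
     (\<Sum>u\<in>UNIV. \<rho> (flip_dist P C u)) / real (card (UNIV :: 'x assign set))"

lemma share_function_bounds: "share_function \<rho> \<Longrightarrow> 0 \<le> \<rho> e \<and> \<rho> e \<le> 1"
  unfolding share_function_def by (metis enat_ord_code(3) zero_le)

lemma share_function_antimono: "share_function \<rho> \<Longrightarrow> a \<le> b \<Longrightarrow> \<rho> b \<le> \<rho> a"
  unfolding share_function_def by blast

lemma geometric_share_add:
  fixes \<rho> :: "enat \<Rightarrow> real"
  assumes "\<rho> \<infinity> = 0" and "\<And>k. \<rho> (enat k) = lam ^ k"
  shows "\<rho> (a + b) = \<rho> a * \<rho> b"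
  using assms by (cases a; cases b) (simp_all add: power_add)

lemma expected_share_const:
  fixes P :: "('x::finite) bf"
  assumes "\<And>u. \<rho> (flip_dist P C u) = c"
  shows "expected_share \<rho> P C = c"
  unfolding expected_share_def assms by (simp add: card_gt_0_iff)

lemma expected_share_bounds:
  fixes P :: "('x::finite) bf"
  assumes "share_function \<rho>"
  shows "0 \<le> expected_share \<rho> P C \<and> expected_share \<rho> P C \<le> 1"
proof -
  have "(\<Sum>u\<in>UNIV. \<rho> (flip_dist P C u)) \<le> (\<Sum>u\<in>(UNIV :: 'x assign set). 1 :: real)"
    by (rule sum_mono) (use share_function_bounds[OF assms] in auto)
  moreover have "0 \<le> (\<Sum>u\<in>UNIV. \<rho> (flip_dist P C u))"
    by (rule sum_nonneg) (use share_function_bounds[OF assms] in auto)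
  ultimately show ?thesis
    unfolding expected_share_def by (simp add: divide_le_eq_1 card_gt_0_iff)
qed

lemma expected_share_mono:
  fixes P Q :: "('x::finite) bf"
  assumes "share_function \<rho>" and "\<And>v. Q v \<Longrightarrow> P v"
  shows "expected_share \<rho> Q C \<le> expected_share \<rho> P C"
  unfolding expected_share_def
  by (intro divide_right_mono sum_mono share_function_antimono[OF assms(1)] flip_dist_antimono)
     (use assms(2) in auto)

lemma expected_share_inter_dep:
  fixes P :: "('x::finite) bf"
  assumes "C \<inter> dep P = C' \<inter> dep P"
  shows "expected_share \<rho> P C = expected_share \<rho> P C'"
  unfolding expected_share_def by (metis assms flip_dist_inter_dep)

definition merge :: "'x set \<Rightarrow> 'x assign \<Rightarrow> 'x assign \<Rightarrow> 'x assign" where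
  "merge A u v = (\<lambda>y. if y \<in> A then u y else v y)"

lemma sum_mult_blocks:
  fixes \<phi> \<psi> :: "('x::finite) assign \<Rightarrow> real"
  assumes \<phi>: "\<And>u v. \<forall>y\<in>A. u y = v y \<Longrightarrow> \<phi> u = \<phi> v"
    and \<psi>: "\<And>u v. \<forall>y. y \<notin> A \<longrightarrow> u y = v y \<Longrightarrow> \<psi> u = \<psi> v"
  shows "real (card (UNIV :: 'x assign set)) * (\<Sum>u\<in>UNIV. \<phi> u * \<psi> u)
       = (\<Sum>u\<in>UNIV. \<phi> u) * (\<Sum>u\<in>UNIV. \<psi> u)"
proof -
  let ?U = "UNIV :: 'x assign set"
  let ?swap = "\<lambda>(u, v). (merge A u v, merge A v u)"
  have "(\<Sum>u\<in>UNIV. \<phi> u) * (\<Sum>u\<in>UNIV. \<psi> u) = (\<Sum>(u, v)\<in>?U \<times> ?U. \<phi> u * \<psi> v)"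
    by (simp add: sum_product sum.cartesian_product)
  also have "\<dots> = (\<Sum>(u, v)\<in>?U \<times> ?U. \<phi> (merge A u v) * \<psi> (merge A u v))"
  proof (rule sum.cong[OF refl], clarify)
    fix u v :: "'x assign"
    have "\<phi> (merge A u v) = \<phi> u" by (rule \<phi>) (simp add: merge_def)
    moreover have "\<psi> (merge A u v) = \<psi> v" by (rule \<psi>) (simp add: merge_def)
    ultimately show "\<phi> u * \<psi> v = \<phi> (merge A u v) * \<psi> (merge A u v)" by simp
  qed
  also have "\<dots> = (\<Sum>(u, v)\<in>?U \<times> ?U. \<phi> u * \<psi> u)"
    by (rule sum.reindex_bij_witness[where i = ?swap and j = ?swap])
       (auto simp: merge_def fun_eq_iff)
  also have "\<dots> = real (card ?U) * (\<Sum>u\<in>UNIV. \<phi> u * \<psi> u)"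
    unfolding sum.cartesian_product' by (simp add: sum_distrib_left)
  finally show ?thesis ..
qed

lemma expected_share_conj:
  fixes P Q :: "('x::finite) bf"
  assumes "\<rho> \<infinity> = 0" and "\<And>k. \<rho> (enat k) = lam ^ k" and disj: "dep P \<inter> dep Q = {}"
  shows "expected_share \<rho> (\<lambda>v. P v \<and> Q v) C = expected_share \<rho> P C * expected_share \<rho> Q C"
proof -
  define N where "N = real (card (UNIV :: 'x assign set))"
  define \<phi> where "\<phi> u = \<rho> (flip_dist P C u)" for u
  define \<psi> where "\<psi> u = \<rho> (flip_dist Q C u)" for u
  have "N * (\<Sum>u\<in>UNIV. \<phi> u * \<psi> u) = (\<Sum>u\<in>UNIV. \<phi> u) * (\<Sum>u\<in>UNIV. \<psi> u)"
    unfolding N_def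
  proof (rule sum_mult_blocks[where A = "dep P"])
    fix u v :: "'x assign"
    show "\<phi> u = \<phi> v" if "\<forall>y\<in>dep P. u y = v y"
      unfolding \<phi>_def using flip_dist_cong[OF that] by simp
    show "\<psi> u = \<psi> v" if "\<forall>y. y \<notin> dep P \<longrightarrow> u y = v y"
    proof -
      have "\<forall>y\<in>dep Q. u y = v y" using that disj by blast
      then show ?thesis unfolding \<psi>_def using flip_dist_cong[of Q u v C] by simp
    qed
  qed
  moreover have "N > 0" unfolding N_def by (simp add: card_gt_0_iff)
  moreover have "\<rho> (flip_dist (\<lambda>v. P v \<and> Q v) C u) = \<phi> u * \<psi> u" for u
    unfolding \<phi>_def \<psi>_def flip_dist_conj[OF disj] by (rule geometric_share_add[OF assms(1,2)])
  ultimately show ?thesis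
    unfolding expected_share_def N_def[symmetric] \<phi>_def[symmetric] \<psi>_def[symmetric]
    by (simp add: field_simps)
qed

lemma sum_assign_flip: "(\<Sum>u\<in>UNIV. h (flip A u)) = (\<Sum>u\<in>(UNIV :: ('x::finite) assign set). h u)"
  by (rule sum.reindex_bij_witness[where i = "flip A" and j = "flip A"]) auto

lemma sum_assign_comp_bij:
  fixes \<sigma> :: "'x::finite \<Rightarrow> 'x"
  assumes "bij \<sigma>"
  shows "(\<Sum>u\<in>UNIV. h (u \<circ> \<sigma>)) = (\<Sum>u\<in>(UNIV :: 'x assign set). h u)"
proof (rule sum.reindex_bij_witness[where i = "\<lambda>u. u \<circ> inv \<sigma>" and j = "\<lambda>u. u \<circ> \<sigma>"])
  have "\<sigma> \<circ> inv \<sigma> = id" using assms bij_is_surj surj_iff by blast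
  moreover have "inv \<sigma> \<circ> \<sigma> = id" using assms bij_is_inj inj_iff by blast
  ultimately show "u \<circ> inv \<sigma> \<circ> \<sigma> = u" "u \<circ> \<sigma> \<circ> inv \<sigma> = u" for u :: "'x assign"
    by (simp_all add: comp_assoc)
qed auto

section \<open>Pivotality and the modified blame\<close>

definition pivotal :: "'x \<Rightarrow> 'x bf \<Rightarrow> 'x bf" where
  "pivotal x f v \<longleftrightarrow> f v \<noteq> f (flip {x} v)"

lemma mscs_eq_flip_dist: "mscs u x f = flip_dist (pivotal x f) (-{x}) u"
proof -
  have "f (flip (insert x S) u) = f (flip {x} (flip S u))" if "S \<subseteq> -{x}" for S
    using that by (subst flip_insert) auto
  then have "(S \<subseteq> -{x} \<and> f (flip S u) \<noteq> f (flip (insert x S) u))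
      \<longleftrightarrow> (S \<subseteq> -{x} \<and> pivotal x f (flip S u))" for S
    unfolding pivotal_def by blast
  then show ?thesis unfolding mscs_def flip_dist_def by simp
qed

lemma MB_eq_expected_share: "MB \<rho> x f = expected_share \<rho> (pivotal x f) (-{x})"
  by (simp add: MB_def expected_share_def mscs_eq_flip_dist)

lemma pivotal_eq_bderiv: "pivotal x f = bderiv x f"
proof
  fix v
  show "pivotal x f v = bderiv x f v"
  proof (cases "v x")
    case True
    then have "v(x := True) = v" "v(x := False) = flip {x} v" by (auto simp: flip_def fun_eq_iff)
    then show ?thesis by (auto simp: pivotal_def bderiv_def cof_def)
  next
    case False
    then have "v(x := False) = v" "v(x := True) = flip {x} v" by (auto simp: flip_def fun_eq_iff)
    then show ?thesis by (auto simp: pivotal_def bderiv_def cof_def)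
  qed
qed

lemma dep_pivotal_subset:
  fixes g :: "('x::finite) bf"
  shows "dep (pivotal x g) \<subseteq> dep g"
proof (rule dep_subsetI)
  fix u v :: "'x assign"
  assume agree: "\<forall>y\<in>dep g. u y = v y"
  have "g u = g v" by (rule bf_eq_if_agree_on_dep[of g]) (use agree in auto)
  moreover have "g (flip {x} u) = g (flip {x} v)"
    by (rule bf_eq_if_agree_on_dep[of g]) (use agree in \<open>auto simp: flip_def\<close>)
  ultimately show "pivotal x g u = pivotal x g v" by (simp add: pivotal_def)
qed

lemma not_pivotal_if_nondep:
  fixes f :: "('x::finite) bf"
  assumes "x \<notin> dep f"
  shows "\<not> pivotal x f v"
proof -
  have "f v = f (flip {x} v)"
    by (rule bf_eq_if_agree_on_dep[of f]) (use assms in \<open>auto simp: flip_def\<close>)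
  then show ?thesis by (simp add: pivotal_def)
qed

lemma pivotal_var: "pivotal x (var x) v" and pivotal_neg_var: "pivotal x (neg (var x)) v"
  by (auto simp: pivotal_def var_def neg_def flip_def)

lemma pivotal_neg: "pivotal x (neg g) = pivotal x g"
  by (auto simp: pivotal_def neg_def fun_eq_iff)

lemma pivotal_flip_var: "pivotal x (flip_var f y) v = pivotal x f (flip {y} v)"
  by (simp add: pivotal_def flip_var_def flip_comm)

lemma perm_bf_apply: "bij \<sigma> \<Longrightarrow> perm_bf \<sigma> f v = f (v \<circ> \<sigma>)"
  by (simp add: perm_bf_def perm_assign_def inv_inv_eq comp_def)

lemma pivotal_perm_bf:
  assumes "bij \<sigma>"
  shows "pivotal (\<sigma> x) (perm_bf \<sigma> f) v = pivotal x f (v \<circ> \<sigma>)"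
proof -
  have "flip {\<sigma> x} v \<circ> \<sigma> = flip {x} (v \<circ> \<sigma>)"
    using bij_is_inj[OF assms] by (auto simp: flip_def fun_eq_iff inj_eq)
  then show ?thesis using assms by (simp add: pivotal_def perm_bf_apply)
qed

lemma MB_flip_var:
  fixes f :: "('x::finite) bf"
  shows "MB \<rho> x (flip_var f y) = MB \<rho> x f"
proof -
  have "flip_dist (pivotal x (flip_var f y)) (-{x}) u = flip_dist (pivotal x f) (-{x}) (flip {y} u)"
    for u
    unfolding pivotal_flip_var[abs_def] by (rule flip_dist_flip)
  then show ?thesis
    unfolding MB_eq_expected_share expected_share_def
    by (simp add: sum_assign_flip[of "\<lambda>u. \<rho> (flip_dist (pivotal x f) (-{x}) u)"])
qed

lemma MB_perm_bf:
  fixes f :: "('x::finite) bf"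
  assumes "bij \<sigma>"
  shows "MB \<rho> (\<sigma> x) (perm_bf \<sigma> f) = MB \<rho> x f"
proof -
  have "\<sigma> -` (-{\<sigma> x}) = -{x}"
    using bij_is_inj[OF assms] by (auto simp: inj_eq)
  then have "flip_dist (pivotal (\<sigma> x) (perm_bf \<sigma> f)) (-{\<sigma> x}) u
      = flip_dist (pivotal x f) (-{x}) (u \<circ> \<sigma>)" for u
    unfolding pivotal_perm_bf[OF assms, abs_def] flip_dist_comp_bij[OF assms] by simp
  then show ?thesis
    unfolding MB_eq_expected_share expected_share_def
    by (simp add: sum_assign_comp_bij[OF assms, of "\<lambda>u. \<rho> (flip_dist (pivotal x f) (-{x}) u)"])
qed

section \<open>Modular decompositions\<close>

lemma nonconst_obtains:
  assumes "\<not> is_const g"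
  obtains w where "g w = c"
  using assms unfolding is_const_def by (cases c) (metis (full_types))+

lemma modular_wit_dep_cof_disjoint:
  fixes l :: "('x::finite) bf"
  assumes "modular_wit f g l z"
  shows "dep (cof z c l) \<inter> dep g = {}"
  using assms dep_cof_subset[of z c l] unfolding modular_wit_def by blast

lemma modular_wit_dep_bderiv_disjoint:
  fixes l :: "('x::finite) bf"
  assumes "modular_wit f g l z"
  shows "dep (bderiv z l) \<inter> dep g = {}"
  using dep_bderiv_subset[of z l] modular_wit_dep_cof_disjoint[OF assms] by blast

text \<open>Every value of a cofactor \<open>\<ell>\<^sub>z\<^sub>/\<^sub>c\<close> is a value of \<open>f\<close>; this is what makes
  \<open>f\<^sub>g\<^sub>/\<^sub>c\<close> independent of the chosen witness.\<close>
lemma modular_wit_apply_merge: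
  fixes l :: "('x::finite) bf"
  assumes w: "modular_wit f g l z"
  shows "f (merge (dep g) w u) = cof z (g w) l u"
proof -
  have g_eq: "g (merge (dep g) w u) = g w"
    by (rule bf_eq_if_agree_on_dep[of g]) (simp add: merge_def)
  have "cof z c l (merge (dep g) w u) = cof z c l u" for c
    by (rule bf_eq_if_agree_on_dep[of "cof z c l"])
       (use modular_wit_dep_cof_disjoint[OF w, of c] in \<open>auto simp: merge_def\<close>)
  moreover have "f = subst l z g" using w by (simp add: modular_wit_def)
  ultimately show ?thesis using g_eq by (cases "g w") (simp_all add: subst_def)
qed

lemma modular_wit_cof_unique:
  fixes l :: "('x::finite) bf"
  assumes "\<not> is_const g" and "modular_wit f g l z" and "modular_wit f g l' z'"
  shows "cof z c l = cof z' c l'"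
proof
  fix u
  obtain w where "g w = c" using nonconst_obtains[OF assms(1)] by blast
  then show "cof z c l u = cof z' c l' u"
    using modular_wit_apply_merge[OF assms(2), of w u] modular_wit_apply_merge[OF assms(3), of w u]
    by simp
qed

lemma gcof_eq_cof:
  fixes l :: "('x::finite) bf"
  assumes nc: "\<not> is_const g" and w: "modular_wit f g l z"
  shows "gcof f g c = cof z c l"
proof -
  obtain l' z' where "(SOME (l, z). modular_wit f g l z) = (l', z')" by fastforce
  moreover have "case SOME (l, z). modular_wit f g l z of (l, z) \<Rightarrow> modular_wit f g l z"
    by (rule someI[of _ "(l, z)"]) (simp add: w)
  ultimately have "gcof f g c = cof z' c l'" and "modular_wit f g l' z'"
    by (simp_all add: gcof_def)
  then show ?thesis using modular_wit_cof_unique[OF nc w] by metis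
qed

lemma dep_cof_subset_dep:
  fixes l :: "('x::finite) bf"
  assumes nc: "\<not> is_const g" and w: "modular_wit f g l z"
  shows "dep (cof z c l) \<subseteq> dep f"
proof
  fix y assume y: "y \<in> dep (cof z c l)"
  then obtain u where u: "cof z c l (u(y := True)) \<noteq> cof z c l (u(y := False))"
    using mem_dep_iff by metis
  obtain w where gw: "g w = c" using nonconst_obtains[OF nc] by blast
  have "y \<notin> dep g" using y modular_wit_dep_cof_disjoint[OF w, of c] by blast
  then have "merge (dep g) w (u(y := b)) = (merge (dep g) w u)(y := b)" for b
    by (auto simp: merge_def fun_eq_iff)
  then have "f ((merge (dep g) w u)(y := b)) = cof z c l (u(y := b))" for b
    using modular_wit_apply_merge[OF w, of w "u(y := b)"] gw by simp
  then show "y \<in> dep f" using u mem_dep_iff by metis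
qed

lemma pivotal_modular:
  fixes l :: "('x::finite) bf"
  assumes w: "modular_wit f g l z" and x: "x \<in> dep g"
  shows "pivotal x f v \<longleftrightarrow> pivotal x g v \<and> bderiv z l v"
proof -
  have "cof z c l (flip {x} v) = cof z c l v" for c
    by (rule bf_eq_if_agree_on_dep[of "cof z c l"])
       (use modular_wit_dep_cof_disjoint[OF w, of c] x in \<open>auto simp: flip_def\<close>)
  moreover have "f = subst l z g" using w by (simp add: modular_wit_def)
  ultimately show ?thesis
    unfolding pivotal_def bderiv_def subst_def by (metis (full_types))
qed

lemma pivotal_gsubst:
  fixes l :: "('x::finite) bf"
  assumes nc: "\<not> is_const g" and w: "modular_wit f g l z" and xg: "xg \<notin> dep f"
  shows "pivotal xg (gsubst f g xg) = bderiv z l"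
proof
  fix v
  have "cof z c l (flip {xg} v) = cof z c l v" for c
    by (rule bf_eq_if_agree_on_dep[of "cof z c l"])
       (use dep_cof_subset_dep[OF nc w, of c] xg in \<open>auto simp: flip_def\<close>)
  then show "pivotal xg (gsubst f g xg) v = bderiv z l v"
    unfolding pivotal_def gsubst_def bderiv_def gcof_eq_cof[OF nc w]
    by (auto simp: flip_def)
qed

lemma MB_mono_modular:
  fixes f g h :: "('x::finite) bf"
  assumes sf: "share_function \<rho>" and mf: "mono_modular f g" and mh: "mono_modular h g"
    and le1: "\<forall>u. gcof h g True u \<longrightarrow> gcof f g True u"
    and le0: "\<forall>u. gcof f g False u \<longrightarrow> gcof h g False u"
    and x: "x \<in> dep g"
  shows "MB \<rho> x h \<le> MB \<rho> x f"
proof -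
  obtain l z where wf: "modular_wit f g l z" and nc: "\<not> is_const g"
    using mf unfolding mono_modular_def by blast
  obtain l' z' where wh: "modular_wit h g l' z'" and mono: "mono_in l' z'"
    using mh unfolding mono_modular_def by blast
  have "pivotal x f v" if "pivotal x h v" for v
  proof -
    have "pivotal x g v" and "cof z' True l' v" and "\<not> cof z' False l' v"
      using that mono unfolding pivotal_modular[OF wh x] mono_in_def bderiv_def by blast+
    then have "pivotal x g v" and "cof z True l v" and "\<not> cof z False l v"
      using le1 le0 unfolding gcof_eq_cof[OF nc wf] gcof_eq_cof[OF nc wh] by blast+
    then show ?thesis unfolding pivotal_modular[OF wf x] bderiv_def by simp
  qed
  then show ?thesis
    unfolding MB_eq_expected_share by (rule expected_share_mono[OF sf])
qed

lemma MB_chain_rule: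
  fixes f g :: "('x::finite) bf"
  assumes "\<rho> \<infinity> = 0" and "\<And>k. \<rho> (enat k) = lam ^ k"
    and md: "modular f g" and x: "x \<in> dep g" and xg: "xg \<notin> dep f"
  shows "MB \<rho> x f = MB \<rho> x g * MB \<rho> xg (gsubst f g xg)"
proof -
  obtain l z where w: "modular_wit f g l z" and nc: "\<not> is_const g"
    using md unfolding modular_def by blast
  have dg: "dep (bderiv z l) \<inter> dep g = {}" by (rule modular_wit_dep_bderiv_disjoint[OF w])
  have "dep (bderiv z l) \<subseteq> dep f"
    using dep_bderiv_subset[of z l] dep_cof_subset_dep[OF nc w] by blast
  then have "-{x} \<inter> dep (bderiv z l) = -{xg} \<inter> dep (bderiv z l)"
    using dg x xg by blast
  then have share_bderiv:
    "expected_share \<rho> (bderiv z l) (-{x}) = MB \<rho> xg (gsubst f g xg)"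
    unfolding MB_eq_expected_share pivotal_gsubst[OF nc w xg] by (rule expected_share_inter_dep)
  have "dep (pivotal x g) \<inter> dep (bderiv z l) = {}"
    using dep_pivotal_subset[of x g] dg by blast
  then have "MB \<rho> x f = MB \<rho> x g * expected_share \<rho> (bderiv z l) (-{x})"
    unfolding MB_eq_expected_share pivotal_modular[OF w x, abs_def]
    by (rule expected_share_conj[OF assms(1,2)])
  then show ?thesis unfolding share_bderiv .
qed

section \<open>The modified blame as an importance value function\<close>

lemma MB_IVF:
  assumes sf: "share_function \<rho>"
  shows "IVF (MB \<rho> :: ('x::finite) value_fun)"
  unfolding IVF_def
proof (intro conjI allI impI)
  have rho_0: "\<rho> 0 = 1" and rho_infinity: "\<rho> \<infinity> = 0" using sf unfolding share_function_def by auto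
  fix x :: 'x and f :: "'x bf"
  show "0 \<le> MB \<rho> x f" "MB \<rho> x f \<le> 1"
    unfolding MB_eq_expected_share using expected_share_bounds[OF sf] by blast+
  show "MB \<rho> x f = 0" if "x \<notin> dep f"
    unfolding MB_eq_expected_share using that rho_infinity
    by (intro expected_share_const) (simp add: flip_dist_eq_infinity not_pivotal_if_nondep)
  show "MB \<rho> x (var x) = 1" "MB \<rho> x (neg (var x)) = 1"
    unfolding MB_eq_expected_share using rho_0
    by (auto intro!: expected_share_const simp: flip_dist_eq_0 pivotal_var pivotal_neg_var)
  show "MB \<rho> x f = MB \<rho> (\<sigma> x) (perm_bf \<sigma> f)" if "bij \<sigma>" for \<sigma>
    using MB_perm_bf[OF that] by simp
  show "MB \<rho> x f = MB \<rho> x (flip_var f y)" for y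
    by (rule MB_flip_var[symmetric])
  show "MB \<rho> x h \<le> MB \<rho> x f"
    if "mono_modular f g \<and> mono_modular h g \<and>
        (\<forall>u. gcof h g True u \<longrightarrow> gcof f g True u) \<and>
        (\<forall>u. gcof f g False u \<longrightarrow> gcof h g False u) \<and> x \<in> dep g" for g h
    using MB_mono_modular[OF sf] that by blast
qed

lemma MB_unbiased: "unbiased (MB \<rho> :: ('x::finite) value_fun)"
  unfolding unbiased_def MB_eq_expected_share pivotal_neg by simp

lemma MB_derivative_dependent:
  "share_function \<rho> \<Longrightarrow> derivative_dependent (MB \<rho> :: ('x::finite) value_fun)"
  unfolding derivative_dependent_def MB_eq_expected_share pivotal_eq_bderiv
  by (blast intro: expected_share_mono)

lemma MB_chain_rule_decomposable:
  fixes \<rho> :: "enat \<Rightarrow> real"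
  assumes sf: "share_function \<rho>" and geom: "\<And>k. k \<ge> 1 \<Longrightarrow> \<rho> (enat k) = lam ^ k"
  shows "chain_rule_decomposable (MB \<rho> :: ('x::finite) value_fun)"
proof -
  have "\<rho> (enat k) = lam ^ k" for k
    using geom[of k] sf unfolding share_function_def
    by (cases "k = 0") (simp_all add: zero_enat_def[symmetric])
  moreover have "\<rho> \<infinity> = 0" using sf unfolding share_function_def by blast
  ultimately show ?thesis
    unfolding chain_rule_decomposable_def using MB_chain_rule by blast
qed

theorem mainTheorem5:
  fixes \<rho> :: "enat \<Rightarrow> real"
  assumes "share_function \<rho>"
  shows "IVF (MB \<rho> :: ('x::finite) value_fun) \<and> unbiased (MB \<rho> :: 'x value_fun)
         \<and> derivative_dependent (MB \<rho> :: 'x value_fun)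
         \<and> ((\<exists>lam::real. 0 \<le> lam \<and> lam < 1 \<and> (\<forall>k::nat. k \<ge> 1 \<longrightarrow> \<rho> (enat k) = lam ^ k))
              \<longrightarrow> chain_rule_decomposable (MB \<rho> :: 'x value_fun))"
  using assms MB_IVF MB_unbiased MB_derivative_dependent MB_chain_rule_decomposable by blast

end
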